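(* Let $n\ge 3$ and let $DW_n$ be the double wheel graph. Then $$\chi'(DW_n)=\begin{cases}3(n+1) & \text{if } n \text{ is even},\\ 3n+7 & \text{if } n \text{ is odd}.\end{cases}$$
   Context: The double wheel graph $DW_n=2C_n+K_1$ is obtained from the disjoint union of two cycles $C_n$ by adding one new vertex adjacent to every vertex of both cycles. For a proper colouring $c:V(G)\to\{1,\dots,k\}$ of a graph $G$ (colour $c_i$ identified with the integer $i$), its colouring sum is $\sum_{i=1}^k i\,\theta(c_i)=\sum_{v\in V(G)} c(v)$, where $\theta(c_i)$ is the number of vertices receiving colour $c_i$. The $\chi$-chromatic sum $\chi'(G)$ is the minimum of the colouring sum over all proper colourings of $G$ using exactly $\chi(G)$ colours (the chromatic number), i.e. over all proper colourings $c:V(G)\to\{1,\dots,\chi(G)\}$. *)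

theory Defs
  imports Main
begin

definition proper_colouring :: "'a set \<Rightarrow> ('a \<Rightarrow> 'a \<Rightarrow> bool) \<Rightarrow> nat \<Rightarrow> ('a \<Rightarrow> nat) \<Rightarrow> bool" where
  "proper_colouring V E k c \<longleftrightarrow>
     (\<forall>v\<in>V. c v \<in> {1..k}) \<and> (\<forall>u\<in>V. \<forall>v\<in>V. E u v \<longrightarrow> c u \<noteq> c v)"

definition chromatic_number :: "'a set \<Rightarrow> ('a \<Rightarrow> 'a \<Rightarrow> bool) \<Rightarrow> nat" where
  "chromatic_number V E = (LEAST k. \<exists>c. proper_colouring V E k c)"

definition chi_chromatic_sum :: "'a set \<Rightarrow> ('a \<Rightarrow> 'a \<Rightarrow> bool) \<Rightarrow> nat" where
  "chi_chromatic_sum V E =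
     (LEAST s. \<exists>c. proper_colouring V E (chromatic_number V E) c \<and> s = (\<Sum>v\<in>V. c v))"

text \<open>Double wheel DW_n = 2 C_n + K_1. Hub = None; vertex i (i < n) of cycle b
is Some (b, i); cycle edges join i and (i+1) mod n.\<close>
definition dw_verts :: "nat \<Rightarrow> (bool \<times> nat) option set" where
  "dw_verts n = insert None {Some (b, i) | b i. i < n}"

fun dw_adj :: "nat \<Rightarrow> (bool \<times> nat) option \<Rightarrow> (bool \<times> nat) option \<Rightarrow> bool" where
  "dw_adj n None None = False"
| "dw_adj n None (Some (b, i)) = (i < n)"
| "dw_adj n (Some (b, i)) None = (i < n)"
| "dw_adj n (Some (b, i)) (Some (b', j)) =
     (b = b' \<and> i < n \<and> j < n \<and> (j = (i + 1) mod n \<or> i = (j + 1) mod n))"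

end

theory Submission
  imports Defs
begin

text \<open>The hub's colour is excluded from both rims, so each rim is a proper colouring of
  \<open>C\<^sub>n\<close> from the remaining colours. Summing colours over the \<open>n\<close> cycle edges counts
  every rim vertex twice, so twice a rim sum is at least \<open>n\<close> times the smallest sum of two
  distinct available colours. An odd cycle is not 2-colourable, so it also uses a third
  colour, which raises the sums on its two incident edges. With three colours
  (\<open>n\<close> even) the hub colour 3 is optimal; with four colours (\<open>n\<close> odd) hub colour 4 with rims
  \<open>1,2,\<dots>,1,2,3\<close> is optimal.\<close>

definition cycle_colouring :: "nat \<Rightarrow> nat set \<Rightarrow> (nat \<Rightarrow> nat) \<Rightarrow> bool" where
  "cycle_colouring n S f \<longleftrightarrow> (\<forall>i<n. f i \<in> S \<and> f i \<noteq> f (Suc i mod n))"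

lemma cycle_colouringD:
  assumes "cycle_colouring n S f" "i < n"
  shows "f i \<in> S" "f (Suc i mod n) \<in> S" "f i \<noteq> f (Suc i mod n)"
  using assms by (auto simp: cycle_colouring_def)

lemma sum_lessThan_Suc_mod:
  fixes f :: "nat \<Rightarrow> 'a::comm_monoid_add"
  assumes "0 < n"
  shows "(\<Sum>i<n. f (Suc i mod n)) = (\<Sum>i<n. f i)"
proof -
  obtain m where m: "n = Suc m" using assms by (cases n) auto
  have "(\<Sum>i<n. f (Suc i mod n)) = (\<Sum>i<m. f (Suc i mod n)) + f 0"
    using m by simp
  also have "(\<Sum>i<m. f (Suc i mod n)) = (\<Sum>i<m. f (Suc i))"
    using m by (intro sum.cong) auto
  also have "(\<Sum>i<m. f (Suc i)) + f 0 = (\<Sum>i<n. f i)"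
    unfolding m sum.lessThan_Suc_shift by (rule add.commute)
  finally show ?thesis .
qed

lemma sum_ge_two_excess:
  fixes g :: "'a \<Rightarrow> nat"
  assumes "finite A" "\<And>i. i \<in> A \<Longrightarrow> p \<le> g i"
    and "j \<in> A" "k \<in> A" "j \<noteq> k" "p + d \<le> g j" "p + d \<le> g k"
  shows "card A * p + 2 * d \<le> (\<Sum>i\<in>A. g i)"
proof -
  let ?excess = "\<lambda>i. (if i = j then d else 0) + (if i = k then d else 0)"
  have "(\<Sum>i\<in>A. ?excess i) = 2 * d"
    using assms(1,3,4) by (simp add: sum.distrib)
  moreover have "(\<Sum>i\<in>A. p + ?excess i) \<le> (\<Sum>i\<in>A. g i)"
    using assms by (intro sum_mono) auto
  ultimately show ?thesis by (simp add: sum.distrib)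
qed

lemma cycle_colouring_sum_ge:
  assumes "cycle_colouring n S f" "\<And>x y. x \<in> S \<Longrightarrow> y \<in> S \<Longrightarrow> x \<noteq> y \<Longrightarrow> p \<le> x + y"
  shows "n * p \<le> 2 * (\<Sum>i<n. f i)"
proof (cases "n = 0")
  case False
  have "(\<Sum>i<n. p) \<le> (\<Sum>i<n. f i + f (Suc i mod n))"
    using assms cycle_colouringD by (intro sum_mono) auto
  then show ?thesis
    using sum_lessThan_Suc_mod[of n f] False by (simp add: sum.distrib)
qed simp

text \<open>Both cycle edges at \<open>v\<close> have colour sum at least \<open>f v + m\<close>, i.e. an excess of \<open>d\<close>.\<close>

lemma cycle_colouring_sum_ge_at:
  assumes col: "cycle_colouring n S f"
    and pair: "\<And>x y. x \<in> S \<Longrightarrow> y \<in> S \<Longrightarrow> x \<noteq> y \<Longrightarrow> p \<le> x + y"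
    and min: "\<And>x. x \<in> S \<Longrightarrow> m \<le> x"
    and v: "v < n" and big: "p + d \<le> f v + m"
  shows "n * p + 2 * d \<le> 2 * (\<Sum>i<n. f i)"
proof -
  have "n \<noteq> 1" using cycle_colouringD(3)[OF col, of 0] by auto
  with v have n: "2 \<le> n" by linarith
  define u where "u = (if v = 0 then n - 1 else v - 1)"
  have u: "u < n" "u \<noteq> v" "Suc u mod n = v" using n v by (auto simp: u_def)
  let ?g = "\<lambda>i. f i + f (Suc i mod n)"
  have "card {..<n} * p + 2 * d \<le> (\<Sum>i<n. ?g i)"
  proof (rule sum_ge_two_excess[where j = v and k = u])
    show "p \<le> ?g i" if "i \<in> {..<n}" for i
      using that pair cycle_colouringD[OF col] by simp
    show "p + d \<le> ?g v" using big min cycle_colouringD(2)[OF col v] by fastforce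
    show "p + d \<le> ?g u" using big min cycle_colouringD(1)[OF col u(1)] u by fastforce
  qed (use u v in auto)
  then show ?thesis
    using sum_lessThan_Suc_mod[of n f] n by (simp add: sum.distrib)
qed

lemma odd_cycle_colouring_not_two_coloured:
  assumes "odd n" "cycle_colouring n S f"
  shows "\<not> f ` {..<n} \<subseteq> {a, b}"
proof
  assume ab: "f ` {..<n} \<subseteq> {a, b}"
  have alternate: "f i = f 0 \<longleftrightarrow> even i" if "i < n" for i
    using that
  proof (induction i)
    case (Suc i)
    have "f i \<noteq> f (Suc i)"
      using cycle_colouringD(3)[OF assms(2), of i] Suc.prems by simp
    moreover have "f i \<in> {a, b}" "f (Suc i) \<in> {a, b}" "f 0 \<in> {a, b}"
      using ab Suc.prems unfolding image_subset_iff by simp_all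
    ultimately have "f (Suc i) = f 0 \<longleftrightarrow> f i \<noteq> f 0" by (simp, elim disjE; simp)
    then show ?case using Suc by simp
  qed simp
  have n: "0 < n" using assms(1) by presburger
  then have "f (n - 1) \<noteq> f 0"
    using cycle_colouringD(3)[OF assms(2), of "n - 1"] by simp
  moreover have "even (n - 1)" using assms(1) n by simp
  ultimately show False using alternate[of "n - 1"] n by simp
qed

lemma cycle_colouring_three_colours_sum_ge:
  assumes "0 < n" "cycle_colouring n ({1..3} - {h}) f" "h \<in> {1..3}"
  shows "3 * n + 3 \<le> h + 2 * (\<Sum>i<n. f i)"
proof -
  have "n * (6 - h) \<le> 2 * (\<Sum>i<n. f i)"
    by (rule cycle_colouring_sum_ge[OF assms(2)]) (use assms(3) in auto)
  moreover from assms(3) have "h = 1 \<or> h = 2 \<or> h = 3" by auto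
  ultimately show ?thesis using assms(1) by (elim disjE) simp_all
qed

lemma odd_cycle_colouring_four_colours_sum_ge:
  assumes n: "odd n" "3 \<le> n" and col: "cycle_colouring n ({1..4} - {h}) f" and h: "h \<in> {1..4}"
  shows "3 * n + 7 \<le> h + 2 * (\<Sum>i<n. f i)"
proof -
  have min: "\<And>x. x \<in> {1..4} - {h} \<Longrightarrow> 1 \<le> x" by auto
  have third_colour: "\<exists>v<n. f v \<notin> {a, b}" for a b
    using odd_cycle_colouring_not_two_coloured[OF n(1) col, of a b] by auto
  from h consider "h = 1" | "h = 2" | "h = 3" | "h = 4" by force
  then show ?thesis
  proof cases
    case 1
    have "n * 5 \<le> 2 * (\<Sum>i<n. f i)"
      by (rule cycle_colouring_sum_ge[OF col]) (auto simp: 1)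
    then show ?thesis using 1 n(2) by linarith
  next
    case 2
    obtain v where v: "v < n" "f v \<notin> {1, 3}" using third_colour by blast
    then have "f v = 4" using cycle_colouringD(1)[OF col v(1)] 2 by force
    then have "n * 4 + 2 * 1 \<le> 2 * (\<Sum>i<n. f i)"
      by (intro cycle_colouring_sum_ge_at[OF col _ min v(1)]) (auto simp: 2)
    then show ?thesis using 2 n(2) by linarith
  next
    case 3
    obtain v where v: "v < n" "f v \<notin> {1, 2}" using third_colour by blast
    then have "f v = 4" using cycle_colouringD(1)[OF col v(1)] 3 by force
    then have "n * 3 + 2 * 2 \<le> 2 * (\<Sum>i<n. f i)"
      by (intro cycle_colouring_sum_ge_at[OF col _ min v(1)]) (auto simp: 3)
    then show ?thesis using 3 by linarith
  next
    case 4
    obtain v where v: "v < n" "f v \<notin> {1, 2}" using third_colour by blast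
    then have "f v = 3" using cycle_colouringD(1)[OF col v(1)] 4 by force
    then have "n * 3 + 2 * 1 \<le> 2 * (\<Sum>i<n. f i)"
      by (intro cycle_colouring_sum_ge_at[OF col _ min v(1)]) (auto simp: 4)
    \<comment> \<open>parity: \<open>3 n + 2\<close> is odd\<close>
    then show ?thesis using 4 n(1) by presburger
  qed
qed

lemma sum_dw_verts:
  "(\<Sum>v\<in>dw_verts n. c v) =
     c None + (\<Sum>i<n. c (Some (True, i))) + (\<Sum>i<n. c (Some (False, i)))"
proof -
  let ?rim = "\<lambda>b. (\<lambda>i. Some (b, i)) ` {..<n}"
  have verts: "dw_verts n = insert None (?rim True \<union> ?rim False)"
    by (auto simp: dw_verts_def)
  have "(\<Sum>v\<in>dw_verts n. c v) = c None + (\<Sum>v\<in>?rim True \<union> ?rim False. c v)"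
    unfolding verts by (subst sum.insert) auto
  also have "\<dots> = c None + ((\<Sum>v\<in>?rim True. c v) + (\<Sum>v\<in>?rim False. c v))"
    by (subst sum.union_disjoint) auto
  finally show ?thesis by (simp add: sum.reindex inj_on_def add.assoc)
qed

lemma proper_colouring_dw_iff:
  "proper_colouring (dw_verts n) (dw_adj n) k c \<longleftrightarrow>
     c None \<in> {1..k} \<and> (\<forall>b. cycle_colouring n ({1..k} - {c None}) (\<lambda>i. c (Some (b, i))))"
  (is "?proper \<longleftrightarrow> ?hub \<and> ?rims")
proof
  have verts: "None \<in> dw_verts n" "\<And>b i. i < n \<Longrightarrow> Some (b, i) \<in> dw_verts n"
    by (auto simp: dw_verts_def)
  assume ?proper
  then have colours: "\<And>v. v \<in> dw_verts n \<Longrightarrow> c v \<in> {1..k}"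
    and edges: "\<And>u v. u \<in> dw_verts n \<Longrightarrow> v \<in> dw_verts n \<Longrightarrow> dw_adj n u v \<Longrightarrow> c u \<noteq> c v"
    unfolding proper_colouring_def by blast+
  have "c (Some (b, i)) \<noteq> c (Some (b, Suc i mod n))" if "i < n" for b i
    using edges[OF verts(2)[OF that] verts(2)] that by simp
  moreover have "c (Some (b, i)) \<noteq> c None" if "i < n" for b i
    using edges[OF verts(2)[OF that] verts(1)] that by simp
  ultimately show "?hub \<and> ?rims"
    unfolding cycle_colouring_def using colours verts by auto
next
  assume "?hub \<and> ?rims"
  then have hub: ?hub
    and rim: "\<And>b i. i < n \<Longrightarrow> c (Some (b, i)) \<in> {1..k} - {c None}"
    and step: "\<And>b i. i < n \<Longrightarrow> c (Some (b, i)) \<noteq> c (Some (b, Suc i mod n))"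
    unfolding cycle_colouring_def by blast+
  show ?proper
    unfolding proper_colouring_def
  proof (intro conjI ballI impI)
    show "c v \<in> {1..k}" if "v \<in> dw_verts n" for v
      using that hub rim by (auto simp: dw_verts_def)
    show "c u \<noteq> c v" if "dw_adj n u v" for u v
      using that hub rim step by (cases "(n, u, v)" rule: dw_adj.cases) (auto, metis+)
  qed
qed

definition dw_rim_colour :: "nat \<Rightarrow> nat \<Rightarrow> nat" where
  "dw_rim_colour n i = (if odd n \<and> i = n - 1 then 3 else if even i then 1 else 2)"

definition dw_colouring :: "nat \<Rightarrow> (bool \<times> nat) option \<Rightarrow> nat" where
  "dw_colouring n v =
     (case v of None \<Rightarrow> if even n then 3 else 4 | Some (_, i) \<Rightarrow> dw_rim_colour n i)"

lemma proper_colouring_dw_colouring: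
  assumes "2 \<le> n"
  shows "proper_colouring (dw_verts n) (dw_adj n) (if even n then 3 else 4) (dw_colouring n)"
proof -
  have "dw_rim_colour n i \<noteq> dw_rim_colour n (Suc i mod n)" if "i < n" for i
  proof (cases "Suc i = n")
    case True
    then show ?thesis using assms by (auto simp: dw_rim_colour_def)
  next
    case False
    then show ?thesis using that by (auto simp: dw_rim_colour_def)
  qed
  then show ?thesis
    unfolding proper_colouring_dw_iff cycle_colouring_def
    by (auto simp: dw_colouring_def dw_rim_colour_def)
qed

lemma sum_alternating_one_two: "(\<Sum>i<2 * m. if even i then 1 else 2 :: nat) = 3 * m"
  by (induction m) auto

lemma sum_dw_colouring:
  "(\<Sum>v\<in>dw_verts n. dw_colouring n v) = (if even n then 3 * (n + 1) else 3 * n + 7)"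
proof -
  obtain m where m: "n = 2 * m \<or> n = 2 * m + 1" by (metis evenE oddE)
  have "(\<Sum>i<2 * m. dw_rim_colour n i) = 3 * m"
    using m sum_alternating_one_two[of m] by (auto simp: dw_rim_colour_def intro!: sum.cong)
  then have "(\<Sum>i<n. dw_rim_colour n i) = (if even n then 3 * m else 3 * m + 3)"
    using m by (auto simp: dw_rim_colour_def)
  then show ?thesis
    using m unfolding sum_dw_verts by (auto simp: dw_colouring_def)
qed

lemma chromatic_number_dw:
  assumes "3 \<le> n"
  shows "chromatic_number (dw_verts n) (dw_adj n) = (if even n then 3 else 4)"
  unfolding chromatic_number_def
proof (rule Least_equality)
  show "\<exists>c. proper_colouring (dw_verts n) (dw_adj n) (if even n then 3 else 4) c"
    using proper_colouring_dw_colouring assms by (intro exI[of _ "dw_colouring n"]) simp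
next
  fix k assume "\<exists>c. proper_colouring (dw_verts n) (dw_adj n) k c"
  then obtain c where hub: "c None \<in> {1..k}"
    and rim: "cycle_colouring n ({1..k} - {c None}) (\<lambda>i. c (Some (True, i)))"
    unfolding proper_colouring_dw_iff by blast
  have "c (Some (True, 0)) \<in> {1..k} - {c None}" "c (Some (True, 1)) \<in> {1..k} - {c None}"
    "c (Some (True, 0)) \<noteq> c (Some (True, 1))"
    using cycle_colouringD[OF rim, of 0] assms by auto
  with hub have "3 \<le> k" by auto
  moreover have "k \<noteq> 3" if "odd n"
  proof
    assume "k = 3"
    define a b :: nat where "a = (if c None = 1 then 2 else 1)" and "b = (if c None = 3 then 2 else 3)"
    have "c (Some (True, i)) \<in> {a, b}" if "i < n" for i
      using cycle_colouringD(1)[OF rim that] hub \<open>k = 3\<close> by (auto simp: a_def b_def)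
    then have "(\<lambda>i. c (Some (True, i))) ` {..<n} \<subseteq> {a, b}" by auto
    then show False using odd_cycle_colouring_not_two_coloured[OF that rim] by blast
  qed
  ultimately show "(if even n then 3 else 4) \<le> k" by auto
qed

lemma dw_colouring_sum_ge:
  assumes n: "3 \<le> n" and proper: "proper_colouring (dw_verts n) (dw_adj n) (if even n then 3 else 4) c"
  shows "(if even n then 3 * (n + 1) else 3 * n + 7) \<le> (\<Sum>v\<in>dw_verts n. c v)"
proof (cases "even n")
  case True
  with proper have "c None \<in> {1..3}" "\<And>b. cycle_colouring n ({1..3} - {c None}) (\<lambda>i. c (Some (b, i)))"
    unfolding proper_colouring_dw_iff by auto
  then have "3 * n + 3 \<le> c None + 2 * (\<Sum>i<n. c (Some (b, i)))" for b
    using cycle_colouring_three_colours_sum_ge n by simp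
  from this[of True] this[of False] show ?thesis
    using True unfolding sum_dw_verts by simp
next
  case False
  with proper have "c None \<in> {1..4}" "\<And>b. cycle_colouring n ({1..4} - {c None}) (\<lambda>i. c (Some (b, i)))"
    unfolding proper_colouring_dw_iff by auto
  then have "3 * n + 7 \<le> c None + 2 * (\<Sum>i<n. c (Some (b, i)))" for b
    using odd_cycle_colouring_four_colours_sum_ge False n by simp
  from this[of True] this[of False] show ?thesis
    using False unfolding sum_dw_verts by simp
qed

theorem proposition2p1:
  fixes n :: nat
  assumes "n \<ge> 3"
  shows "chi_chromatic_sum (dw_verts n) (dw_adj n) =
           (if even n then 3 * (n + 1) else 3 * n + 7)"
  unfolding chi_chromatic_sum_def chromatic_number_dw[OF assms]
proof (rule Least_equality)
  show "\<exists>c. proper_colouring (dw_verts n) (dw_adj n) (if even n then 3 else 4) c \<and>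
      (if even n then 3 * (n + 1) else 3 * n + 7) = (\<Sum>v\<in>dw_verts n. c v)"
    using proper_colouring_dw_colouring sum_dw_colouring assms by (intro exI[of _ "dw_colouring n"]) simp
next
  fix s assume "\<exists>c. proper_colouring (dw_verts n) (dw_adj n) (if even n then 3 else 4) c \<and>
      s = (\<Sum>v\<in>dw_verts n. c v)"
  then show "(if even n then 3 * (n + 1) else 3 * n + 7) \<le> s"
    using dw_colouring_sum_ge assms by blast
qed

end
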